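(* Let $H\in\mathbb{R}^{n\times d}$ have rank $h$, $\Sigma\in\mathbb{R}^{n\times n}$ symmetric positive definite, $\Gamma_0$ the empirical covariance of an initial ensemble, $G_0=\Gamma_0$ and $G_{i+1}=(I+G_iH^\top\Sigma^{-1}H)^{-1}G_i$. Fix $i\ge0$, and let $\tilde w_1,\dots,\tilde w_n$, $r$, $\tilde\delta_{\ell,i}$ be as in the context. For $\ell=1,\dots,r$ let $\tilde u_\ell=\frac1{\tilde\delta_{\ell,i}}G_iH^\top\tilde w_\ell$, and for $\ell=r+1,\dots,h$ let $\tilde u_\ell=H^+\Sigma\tilde w_\ell$. Then for all $\ell\le h$, $G_iH^\top\Sigma^{-1}H\tilde u_\ell=\tilde\delta_{\ell,i}\tilde u_\ell$, and conversely $\tilde w_\ell=\Sigma^{-1}H\tilde u_\ell$.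
   Context: $H^+=(H^\top\Sigma^{-1}H)^\dagger H^\top\Sigma^{-1}$, $\dagger$ the Moore–Penrose pseudoinverse. $\Gamma_0=\frac1{J-1}\sum_j(v_0^{(j)}-\bar v_0)(v_0^{(j)}-\bar v_0)^\top$. Let $C_i=HG_iH^\top$, $r$ the number of positive eigenvalues of the pencil $(C_i,\Sigma)$, and $\tilde w_1,\dots,\tilde w_n$ a $\Sigma$-orthogonal basis of $\mathbb{R}^n$ of generalized eigenvectors, $C_i\tilde w_\ell=\tilde\delta_{\ell,i}\Sigma\tilde w_\ell$, with $\tilde w_1,\dots,\tilde w_r\in\mathsf{Ran}(\Sigma^{-1}H)$ having positive eigenvalues, $\tilde w_{r+1},\dots,\tilde w_h\in\mathsf{Ran}(\Sigma^{-1}H)$ eigenvalue zero, $\tilde w_{h+1},\dots,\tilde w_n\in\mathsf{Ker}(H^\top)$. *)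

theory Defs
  imports "HOL-Analysis.Analysis"
begin

definition mp_pinv :: "real^'m^'k \<Rightarrow> real^'k^'m" where
  "mp_pinv A = (THE X. A ** X ** A = A \<and> X ** A ** X = X \<and>
       transpose (A ** X) = A ** X \<and> transpose (X ** A) = X ** A)"

definition outer :: "real^'a \<Rightarrow> real^'b \<Rightarrow> real^'b^'a" where
  "outer u v = (\<chi> a b. u $ a * v $ b)"

definition ens_mean :: "nat \<Rightarrow> (nat \<Rightarrow> real^'d) \<Rightarrow> real^'d" where
  "ens_mean J v = (1 / real J) *\<^sub>R (\<Sum>j\<in>{1..J}. v j)"

definition emp_cov :: "nat \<Rightarrow> (nat \<Rightarrow> real^'d) \<Rightarrow> real^'d^'d" where
  "emp_cov J v = (1 / (real J - 1)) *\<^sub>R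
     (\<Sum>j\<in>{1..J}. outer (v j - ens_mean J v) (v j - ens_mean J v))"

definition spd :: "real^'n^'n \<Rightarrow> bool" where
  "spd S \<longleftrightarrow> transpose S = S \<and> (\<forall>x. x \<noteq> 0 \<longrightarrow> x \<bullet> (S *v x) > 0)"

end

theory Submission
  imports Defs
begin

text \<open>
  Write \<open>B = H\<^sup>T \<Sigma>\<^sup>-\<^sup>1 H\<close>. For \<open>\<delta> \<noteq> 0\<close> the pencil equation \<open>H G H\<^sup>T w = \<delta> \<Sigma> w\<close>
  gives \<open>H u = \<Sigma> w\<close> for \<open>u = \<delta>\<^sup>-\<^sup>1 G H\<^sup>T w\<close>, and both claims follow by direct
  computation. For \<open>\<delta> = 0\<close> and \<open>w = \<Sigma>\<^sup>-\<^sup>1 H x\<close> two facts are needed. First, every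
  \<open>G\<^sub>k\<close> is symmetric positive semidefinite: the empirical covariance is, and
  \<open>G \<mapsto> (I + G B)\<^sup>-\<^sup>1 G\<close> preserves this since \<open>B\<close> is; hence \<open>w\<^sup>T H G H\<^sup>T w = 0\<close>
  forces \<open>G H\<^sup>T w = 0\<close>. Second, \<open>B B\<^sup>+ B = B\<close> for the symmetric matrix \<open>B\<close> (its
  pseudoinverse is \<open>(B + Q)\<^sup>-\<^sup>1 - Q\<close> with \<open>Q\<close> the orthogonal projector onto \<open>ker B\<close>),
  so \<open>B u = B x\<close>, which by definiteness of \<open>\<Sigma>\<^sup>-\<^sup>1\<close> means \<open>H u = H x\<close>, i.e. \<open>\<Sigma>\<^sup>-\<^sup>1 H u = w\<close>.
\<close>

lemma linear_coeff_zero_if_quadratic_nonneg: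
  fixes a b :: real
  assumes nonneg: "\<And>t. 0 \<le> 2 * t * a + t\<^sup>2 * b"
  shows "a = 0"
proof -
  define c where "c = \<bar>b\<bar> + 1"
  have c: "c > 0" "b - 2 * c < 0" unfolding c_def by auto
  have "0 \<le> (2 * (- a / c) * a + (- a / c)\<^sup>2 * b) * c\<^sup>2"
    using nonneg[of "- a / c"] by simp
  also have "\<dots> = a\<^sup>2 * (b - 2 * c)"
    using c by (simp add: field_simps power2_eq_square)
  finally show ?thesis
    using c(2) mult_pos_neg[of "a\<^sup>2" "b - 2 * c"] by fastforce
qed

lemma matrix_add_rdistrib: "(A + B) ** C = A ** C + B ** (C :: 'a::semiring_1^'p^'n)"
  by (vector matrix_matrix_mult_def sum.distrib[symmetric] field_simps)

lemma matrix_diff_ldistrib: "A ** (B - C) = A ** B - A ** (C :: 'a::ring_1^'p^'n)"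
  by (vector matrix_matrix_mult_def sum_subtractf[symmetric] field_simps)

lemma matrix_diff_rdistrib: "(A - B) ** C = A ** C - B ** (C :: 'a::ring_1^'p^'n)"
  by (vector matrix_matrix_mult_def sum_subtractf[symmetric] field_simps)

lemma transpose_add: "transpose (A + B) = transpose A + transpose (B :: 'a::semiring_1^'n^'m)"
  by (simp add: transpose_def vec_eq_iff)

lemma transpose_diff: "transpose (A - B) = transpose A - transpose (B :: 'a::ring_1^'n^'m)"
  by (simp add: transpose_def vec_eq_iff)

lemma inner_transpose_matrix_vector: "x \<bullet> (transpose M *v y) = (M *v x) \<bullet> (y :: real^'m)"
  by (metis dot_lmul_matrix inner_commute transpose_matrix_vector)

lemma symmetric_matrix_inner:
  "transpose M = M \<Longrightarrow> x \<bullet> (M *v y) = (M *v x) \<bullet> (y :: real^'n)"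
  by (metis inner_transpose_matrix_vector)

lemma invertible_iff_ker:
  "invertible (A :: real^'n^'n) \<longleftrightarrow> (\<forall>x. A *v x = 0 \<longrightarrow> x = 0)"
  by (simp add: invertible_left_inverse matrix_left_invertible_ker)

lemma invertible_matrix_inv:
  fixes A :: "real^'n^'n"
  assumes "invertible A"
  shows matrix_inv_right: "A ** matrix_inv A = mat 1"
    and matrix_inv_left: "matrix_inv A ** A = mat 1"
  using someI_ex[OF assms[unfolded invertible_def]] by (simp_all add: matrix_inv_def)

lemma sum_matrix_vector: "sum A I *v x = (\<Sum>i\<in>I. A i *v (x :: real^'n))"
  by (induction I rule: infinite_finite_induct) (simp_all add: matrix_vector_mult_add_rdistrib)

lemma outer_matrix_vector: "outer u v *v x = (v \<bullet> x) *\<^sub>R u"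
  by (simp add: outer_def matrix_vector_mult_def inner_vec_def vec_eq_iff sum_distrib_left mult_ac)

definition psd :: "real^'n^'n \<Rightarrow> bool" where
  "psd M \<longleftrightarrow> transpose M = M \<and> (\<forall>x. 0 \<le> x \<bullet> (M *v x))"

lemma psdD:
  assumes "psd M"
  shows psd_symmetric: "transpose M = M" and psd_nonneg: "0 \<le> x \<bullet> (M *v x)"
  using assms by (simp_all add: psd_def)

lemma psd_0 [simp]: "psd 0"
  by (simp add: psd_def transpose_def vec_eq_iff)

lemma psd_add: "psd A \<Longrightarrow> psd B \<Longrightarrow> psd (A + B)"
  by (simp add: psd_def transpose_add matrix_vector_mult_add_rdistrib inner_add_right)

lemma psd_scaleR: "0 \<le> c \<Longrightarrow> psd A \<Longrightarrow> psd (c *\<^sub>R A)"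
  by (simp add: psd_def transpose_scalar scaleR_matrix_vector_assoc[symmetric])

lemma psd_sum: "(\<And>i. i \<in> I \<Longrightarrow> psd (A i)) \<Longrightarrow> psd (sum A I)"
  by (induction I rule: infinite_finite_induct) (simp_all add: psd_add)

lemma psd_outer: "psd (outer u u)"
proof -
  have "transpose (outer u u) = outer u u"
    by (simp add: transpose_def outer_def vec_eq_iff mult.commute)
  then show ?thesis
    by (simp add: psd_def outer_matrix_vector inner_commute)
qed

text \<open>No lower bound on \<open>J\<close> is needed: for \<open>J = 1\<close> the factor \<open>1 / (J - 1)\<close> is \<open>1 / 0 = 0\<close>,
  and for \<open>J = 0\<close> the sum is empty.\<close>

lemma psd_emp_cov: "psd (emp_cov J v)"
proof (cases "J = 0")
  case False
  then show ?thesis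
    unfolding emp_cov_def by (intro psd_scaleR psd_sum psd_outer) simp
qed (simp add: emp_cov_def)

lemma psd_quadratic_form_eq_0:
  assumes "psd M" and zero: "x \<bullet> (M *v x) = 0"
  shows "M *v x = 0"
proof -
  define y where "y = M *v x"
  have "0 \<le> 2 * t * (y \<bullet> y) + t\<^sup>2 * (y \<bullet> (M *v y))" for t
  proof -
    have "0 \<le> (x + t *\<^sub>R y) \<bullet> (M *v (x + t *\<^sub>R y))"
      using assms(1) by (rule psd_nonneg)
    also have "\<dots> = x \<bullet> (M *v x) + t * (x \<bullet> (M *v y)) + t * (y \<bullet> (M *v x)) + t\<^sup>2 * (y \<bullet> (M *v y))"
      by (simp add: algebra_simps power2_eq_square)
    also have "\<dots> = 2 * t * (y \<bullet> y) + t\<^sup>2 * (y \<bullet> (M *v y))"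
      using symmetric_matrix_inner[OF psd_symmetric[OF assms(1)], of x y] zero
      by (simp add: y_def inner_commute)
    finally show ?thesis .
  qed
  then have "y \<bullet> y = 0"
    by (rule linear_coeff_zero_if_quadratic_nonneg)
  then show ?thesis
    by (simp add: y_def)
qed

lemma psd_congruence:
  fixes H :: "real^'d^'n"
  assumes "psd P"
  shows "psd (transpose H ** P ** H)"
proof -
  have "x \<bullet> ((transpose H ** P ** H) *v x) = (H *v x) \<bullet> (P *v (H *v x))" for x
    by (metis inner_transpose_matrix_vector matrix_vector_mul_assoc)
  then show ?thesis
    using assms by (simp add: psd_def matrix_transpose_mul matrix_mul_assoc)
qed

lemma spd_imp_psd: "spd S \<Longrightarrow> psd S"
  by (simp add: spd_def psd_def) (metis inner_zero_left order.strict_implies_order order_refl)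

lemma spd_kernel: "spd S \<Longrightarrow> S *v x = 0 \<Longrightarrow> x = 0"
  by (metis inner_zero_right less_irrefl spd_def)

lemma spd_invertible: "spd S \<Longrightarrow> invertible S"
  by (simp add: invertible_iff_ker spd_kernel)

lemma spd_matrix_inv:
  assumes "spd S"
  shows "spd (matrix_inv S)"
proof -
  have S: "S ** matrix_inv S = mat 1" "matrix_inv S ** S = mat 1"
    using invertible_matrix_inv spd_invertible[OF assms] by blast+
  have symS: "transpose S = S"
    using assms by (simp add: spd_def)
  have "transpose (matrix_inv S) = transpose (matrix_inv S) ** (S ** matrix_inv S)"
    using S by simp
  also have "\<dots> = transpose (S ** matrix_inv S) ** matrix_inv S"
    by (simp add: matrix_transpose_mul symS matrix_mul_assoc)
  finally have sym: "transpose (matrix_inv S) = matrix_inv S"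
    using S by simp
  have "0 < y \<bullet> (matrix_inv S *v y)" if "y \<noteq> 0" for y
  proof -
    define z where "z = matrix_inv S *v y"
    have y: "y = S *v z"
      by (simp add: z_def matrix_vector_mul_assoc S)
    then have "z \<noteq> 0"
      using that by auto
    then have "0 < z \<bullet> (S *v z)"
      using assms by (simp add: spd_def)
    then show ?thesis
      by (simp add: y z_def[symmetric] inner_commute matrix_vector_mul_assoc S)
  qed
  with sym show ?thesis
    by (simp add: spd_def)
qed

lemma spd_congruence_kernel:
  fixes H :: "real^'d^'n"
  assumes "spd P" and "(transpose H ** P ** H) *v x = 0"
  shows "H *v x = 0"
proof -
  have "(H *v x) \<bullet> (P *v (H *v x)) = 0"
    using assms(2) by (metis inner_transpose_matrix_vector inner_zero_right matrix_vector_mul_assoc)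
  then show ?thesis
    using assms(1) by (metis less_irrefl spd_def)
qed

lemma invertible_id_plus_psd_mult:
  assumes G: "psd G" and B: "psd B"
  shows "invertible (mat 1 + G ** B)"
  unfolding invertible_iff_ker
proof (intro allI impI)
  fix x
  assume "(mat 1 + G ** B) *v x = 0"
  then have x: "x = - (G *v (B *v x))"
    by (simp add: matrix_vector_mult_add_rdistrib matrix_vector_mul_assoc eq_neg_iff_add_eq_0)
  have "x \<bullet> (B *v x) = - ((B *v x) \<bullet> (G *v (B *v x)))"
    by (subst (1) x) (simp add: inner_commute)
  moreover have "0 \<le> (B *v x) \<bullet> (G *v (B *v x))" "0 \<le> x \<bullet> (B *v x)"
    using G B by (simp_all add: psd_nonneg)
  ultimately have "B *v x = 0"
    using B by (intro psd_quadratic_form_eq_0) auto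
  then show "x = 0"
    using x by simp
qed

lemma psd_update:
  assumes G: "psd G" and B: "psd B"
  shows "psd (matrix_inv (mat 1 + G ** B) ** G)"
proof -
  define N where "N = mat 1 + G ** B"
  define T where "T = transpose (matrix_inv N)"
  have N: "N ** matrix_inv N = mat 1" "matrix_inv N ** N = mat 1"
    using invertible_matrix_inv invertible_id_plus_psd_mult[OF G B] by (simp_all add: N_def)
  have symG: "transpose G = G" and symB: "transpose B = B"
    using G B by (simp_all add: psd_symmetric)
  have tN: "transpose N = mat 1 + B ** G"
    by (simp add: N_def transpose_add matrix_transpose_mul symG symB)
  have NT: "transpose N ** T = mat 1"
    unfolding T_def by (metis N(2) matrix_transpose_mul transpose_mat)
  \<comment> \<open>push-through identity: \<open>G (I + B G) = (I + G B) G\<close>\<close>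
  have "G ** transpose N = N ** G"
    unfolding tN by (simp add: N_def matrix_add_ldistrib matrix_add_rdistrib matrix_mul_assoc)
  then have comm: "matrix_inv N ** G = G ** T"
    by (metis N(2) NT matrix_mul_assoc matrix_mul_lid matrix_mul_rid)
  have sym: "transpose (G ** T) = G ** T"
    using comm by (simp add: matrix_transpose_mul symG T_def)
  have "0 \<le> x \<bullet> ((G ** T) *v x)" for x
  proof -
    define y where "y = T *v x"
    have "x = transpose N *v y"
      by (simp add: y_def matrix_vector_mul_assoc NT)
    then have "x = y + B *v (G *v y)"
      by (simp add: tN matrix_vector_mult_add_rdistrib matrix_vector_mul_assoc)
    then have "x \<bullet> ((G ** T) *v x) = y \<bullet> (G *v y) + (G *v y) \<bullet> (B *v (G *v y))"
      by (metis y_def inner_add_left inner_commute matrix_vector_mul_assoc)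
    then show ?thesis
      using G B by (simp add: psd_nonneg)
  qed
  then show ?thesis
    unfolding N_def[symmetric] comm psd_def using sym by simp
qed

lemma psd_iterates:
  assumes "psd (G 0)" and "psd B"
    and "\<And>k. G (Suc k) = matrix_inv (mat 1 + G k ** B) ** G k"
  shows "psd (G k)"
  by (induction k) (simp_all add: assms psd_update)

definition penrose_inverse :: "real^'m^'k \<Rightarrow> real^'k^'m \<Rightarrow> bool" where
  "penrose_inverse A X \<longleftrightarrow> A ** X ** A = A \<and> X ** A ** X = X \<and>
     transpose (A ** X) = A ** X \<and> transpose (X ** A) = X ** A"

lemma penrose_inverse_unique:
  assumes X: "penrose_inverse A X" and Y: "penrose_inverse A Y"
  shows "X = Y"
proof -
  note X = X[unfolded penrose_inverse_def] and Y = Y[unfolded penrose_inverse_def]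
  have AY: "transpose A = transpose A ** transpose Y ** transpose A"
    by (metis Y matrix_transpose_mul matrix_mul_assoc)
  have AX: "transpose A = transpose A ** transpose X ** transpose A"
    by (metis X matrix_transpose_mul matrix_mul_assoc)
  have "X = X ** transpose X ** transpose A"
    by (metis X matrix_mul_assoc matrix_transpose_mul)
  also have "\<dots> = X ** transpose X ** (transpose A ** transpose Y ** transpose A)"
    by (metis AY)
  also have "\<dots> = X ** transpose (A ** X) ** transpose (A ** Y)"
    by (simp add: matrix_transpose_mul matrix_mul_assoc)
  also have "\<dots> = X ** A ** Y"
    using X Y by (simp add: matrix_mul_assoc)
  finally have XAY: "X = X ** A ** Y" .
  have "Y = transpose A ** transpose Y ** Y"
    by (metis Y matrix_transpose_mul)
  also have "\<dots> = (transpose A ** transpose X ** transpose A) ** transpose Y ** Y"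
    by (metis AX)
  also have "\<dots> = transpose (X ** A) ** transpose (Y ** A) ** Y"
    by (simp add: matrix_transpose_mul matrix_mul_assoc)
  also have "\<dots> = X ** A ** Y"
    using X Y by (metis matrix_mul_assoc)
  finally show ?thesis
    using XAY by simp
qed

lemma mp_pinv_eqI: "penrose_inverse A X \<Longrightarrow> mp_pinv A = X"
  unfolding mp_pinv_def penrose_inverse_def[symmetric]
  by (blast intro: penrose_inverse_unique)

lemma orthogonal_projection_matrix_exists:
  fixes S :: "(real^'n) set"
  assumes "subspace S"
  obtains Q where "transpose Q = Q" "\<And>y. Q *v y \<in> S" "\<And>x. x \<in> S \<Longrightarrow> Q *v x = x"
proof -
  obtain B where B: "B \<subseteq> S" "pairwise orthogonal B" "\<And>x. x \<in> B \<Longrightarrow> norm x = 1"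
    "independent B" "span B = S"
    using orthonormal_basis_subspace[OF assms] by metis
  have "finite B"
    using B(4) independent_imp_finite by blast
  define Q where "Q = (\<Sum>b\<in>B. outer b b)"
  have Qv: "Q *v y = (\<Sum>b\<in>B. (b \<bullet> y) *\<^sub>R b)" for y
    by (simp add: Q_def sum_matrix_vector outer_matrix_vector)
  have "transpose Q = Q"
    unfolding Q_def by (intro psd_symmetric psd_sum psd_outer)
  moreover have Q_in_S: "Q *v y \<in> S" for y
    unfolding Qv B(5)[symmetric] by (intro span_sum span_mul span_base) auto
  moreover have "Q *v x = x" if "x \<in> S" for x
  proof -
    have "c \<bullet> (Q *v x) = c \<bullet> x" if "c \<in> B" for c
    proof -
      have "c \<bullet> (Q *v x) = (\<Sum>b\<in>{c}. (b \<bullet> x) * (c \<bullet> b))"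
        unfolding Qv inner_sum_right inner_scaleR_right using B(2) \<open>finite B\<close> that
        by (intro sum.mono_neutral_right) (auto simp: pairwise_def orthogonal_def)
      also have "\<dots> = c \<bullet> x"
        using B(3)[OF that] by (simp add: norm_eq_1)
      finally show ?thesis .
    qed
    then have "orthogonal (x - Q *v x) c" if "c \<in> B" for c
      using that by (simp add: orthogonal_def inner_diff_right inner_commute)
    then have "orthogonal (x - Q *v x) (x - Q *v x)"
      using B(5) \<open>x \<in> S\<close> Q_in_S assms
      by (metis orthogonal_to_span subspace_diff)
    then show ?thesis
      by (simp add: orthogonal_self)
  qed
  ultimately show ?thesis
    using that by blast
qed

lemma penrose_inverse_symmetric_exists:
  fixes A :: "real^'n^'n"
  assumes symA: "transpose A = A"
  obtains X where "penrose_inverse A X"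
proof -
  have "subspace {x. A *v x = 0}"
    by (auto simp: subspace_def matrix_vector_right_distrib matrix_vector_mult_scaleR)
  then obtain Q where symQ: "transpose Q = Q" and ker_range: "\<And>y. A *v (Q *v y) = 0"
    and ker_fixed: "\<And>x. A *v x = 0 \<Longrightarrow> Q *v x = x"
    by (rule orthogonal_projection_matrix_exists) blast
  have AQ: "A ** Q = 0" and QQ: "Q ** Q = Q"
    by (simp_all add: matrix_eq flip: matrix_vector_mul_assoc add: ker_range ker_fixed)
  have "Q ** A = transpose (A ** Q)"
    by (simp add: matrix_transpose_mul symA symQ)
  then have QA: "Q ** A = 0"
    by (simp add: AQ transpose_def vec_eq_iff)
  define M where "M = A + Q"
  have QM: "Q ** M = Q" and MQ: "M ** Q = Q"
    by (simp_all add: M_def matrix_add_ldistrib matrix_add_rdistrib AQ QA QQ)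
  have "invertible M"
    unfolding invertible_iff_ker
  proof (intro allI impI)
    fix x
    assume Mx: "M *v x = 0"
    then have "Q *v x = 0"
      by (metis QM matrix_vector_mul_assoc matrix_vector_mult_0_right)
    with Mx show "x = 0"
      by (metis M_def ker_fixed add.right_neutral matrix_vector_mult_add_rdistrib)
  qed
  then have Mi: "M ** matrix_inv M = mat 1" "matrix_inv M ** M = mat 1"
    by (simp_all add: invertible_matrix_inv)
  have QMi: "Q ** matrix_inv M = Q" and MiQ: "matrix_inv M ** Q = Q"
    by (metis QM Mi(1) matrix_mul_assoc matrix_mul_rid, metis MQ Mi(2) matrix_mul_assoc matrix_mul_lid)
  define X where "X = matrix_inv M - Q"
  have AX: "A ** X = mat 1 - Q"
    using Mi(1) QMi by (simp add: X_def M_def matrix_diff_ldistrib matrix_add_rdistrib AQ algebra_simps)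
  have XA: "X ** A = mat 1 - Q"
    using Mi(2) MiQ by (simp add: X_def M_def matrix_diff_rdistrib matrix_add_ldistrib QA algebra_simps)
  have "transpose (mat 1 - Q) = mat 1 - Q"
    by (simp add: transpose_diff symQ)
  moreover have "A ** X ** A = A"
    by (simp add: AX matrix_diff_rdistrib QA)
  moreover have "X ** A ** X = X"
  proof -
    have "Q ** X = 0"
      by (simp add: X_def matrix_diff_ldistrib QMi QQ)
    then show ?thesis
      by (simp add: XA matrix_diff_rdistrib)
  qed
  ultimately have "penrose_inverse A X"
    by (simp add: penrose_inverse_def AX XA)
  then show ?thesis
    by (rule that)
qed

lemma mp_pinv_symmetric:
  fixes A :: "real^'n^'n"
  assumes "transpose A = A"
  shows "A ** mp_pinv A ** A = A"
  using penrose_inverse_symmetric_exists[OF assms]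
  by (metis mp_pinv_eqI penrose_inverse_def)

lemma pencil_eigenvector_nonzero:
  fixes H :: "real^'d^'n" and Sigma :: "real^'n^'n" and G :: "real^'d^'d"
  assumes "invertible Sigma"
    and eig: "(H ** G ** transpose H) *v w = \<delta> *\<^sub>R (Sigma *v w)" and "\<delta> \<noteq> 0"
    and u: "u = (1 / \<delta>) *\<^sub>R ((G ** transpose H) *v w)"
  shows "(G ** transpose H ** matrix_inv Sigma ** H) *v u = \<delta> *\<^sub>R u"
    and "w = (matrix_inv Sigma ** H) *v u"
proof -
  have Sigma_inv: "matrix_inv Sigma *v (Sigma *v y) = y" for y
    by (simp add: matrix_vector_mul_assoc matrix_inv_left assms(1))
  have "H *v u = Sigma *v w"
    using eig \<open>\<delta> \<noteq> 0\<close> by (simp add: u matrix_vector_mult_scaleR matrix_vector_mul_assoc matrix_mul_assoc)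
  then show w: "w = (matrix_inv Sigma ** H) *v u"
    by (simp add: Sigma_inv flip: matrix_vector_mul_assoc)
  have "(G ** transpose H ** matrix_inv Sigma ** H) *v u
      = (G ** transpose H) *v ((matrix_inv Sigma ** H) *v u)"
    by (simp add: matrix_vector_mul_assoc matrix_mul_assoc)
  also have "\<dots> = (G ** transpose H) *v w"
    by (simp flip: w)
  also have "\<dots> = \<delta> *\<^sub>R u"
    using \<open>\<delta> \<noteq> 0\<close> by (simp add: u)
  finally show "(G ** transpose H ** matrix_inv Sigma ** H) *v u = \<delta> *\<^sub>R u" .
qed

lemma pencil_eigenvector_zero:
  fixes H :: "real^'d^'n" and Sigma :: "real^'n^'n" and G :: "real^'d^'d"
  assumes Sigma: "spd Sigma" and G: "psd G"
    and eig: "(H ** G ** transpose H) *v w = 0"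
    and w: "w = (matrix_inv Sigma ** H) *v x"
    and u: "u = (mp_pinv (transpose H ** matrix_inv Sigma ** H) ** transpose H ** matrix_inv Sigma)
              *v (Sigma *v w)"
  shows "(G ** transpose H ** matrix_inv Sigma ** H) *v u = 0"
    and "w = (matrix_inv Sigma ** H) *v u"
proof -
  define B where "B = transpose H ** matrix_inv Sigma ** H"
  have Si: "spd (matrix_inv Sigma)"
    using Sigma by (rule spd_matrix_inv)
  have "matrix_inv Sigma *v (Sigma *v w) = w"
    using matrix_inv_left[OF spd_invertible[OF Sigma]] by (simp add: matrix_vector_mul_assoc)
  then have "u = mp_pinv B *v (B *v x)"
    by (simp add: u w B_def flip: matrix_vector_mul_assoc)
  then have "B *v u = (B ** mp_pinv B ** B) *v x"
    by (simp add: matrix_vector_mul_assoc matrix_mul_assoc)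
  also have "\<dots> = B *v x"
    unfolding B_def by (simp add: mp_pinv_symmetric psd_symmetric psd_congruence spd_imp_psd Si)
  finally have "B *v u = B *v x" .
  then have "B *v (u - x) = 0"
    by (simp add: matrix_vector_mult_diff_distrib)
  then have "H *v (u - x) = 0"
    unfolding B_def by (rule spd_congruence_kernel[OF Si])
  then show w_u: "w = (matrix_inv Sigma ** H) *v u"
    by (simp add: w matrix_vector_mult_diff_distrib flip: matrix_vector_mul_assoc)
  have "(transpose H *v w) \<bullet> (G *v (transpose H *v w)) = 0"
    using eig by (metis inner_transpose_matrix_vector inner_commute inner_zero_right matrix_vector_mul_assoc)
  then have "G *v (transpose H *v w) = 0"
    using G by (rule psd_quadratic_form_eq_0[rotated])
  then show "(G ** transpose H ** matrix_inv Sigma ** H) *v u = 0"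
    by (simp add: w_u flip: matrix_vector_mul_assoc)
qed

theorem proposition4p9:
  fixes H :: "real^'d^'n" and Sigma :: "real^'n^'n"
    and J :: nat and v0 :: "nat \<Rightarrow> real^'d"
    and G :: "nat \<Rightarrow> real^'d^'d"
    and i h r :: nat
    and w :: "nat \<Rightarrow> real^'n" and delta :: "nat \<Rightarrow> real"
    and u :: "nat \<Rightarrow> real^'d"
  assumes rankH: "rank H = h"
    and Sigma_spd: "spd Sigma"
    and J2: "2 \<le> J"
    and G0: "G 0 = emp_cov J v0"
    and GSuc: "\<And>k. G (Suc k) =
        matrix_inv (mat 1 + G k ** transpose H ** matrix_inv Sigma ** H) ** G k"
    and w_nz: "\<And>l. l \<in> {1..CARD('n)} \<Longrightarrow> w l \<noteq> 0"
    and w_orth: "\<And>k l. k \<in> {1..CARD('n)} \<Longrightarrow> l \<in> {1..CARD('n)} \<Longrightarrow> k \<noteq> l \<Longrightarrow>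
        w k \<bullet> (Sigma *v w l) = 0"
    and w_span: "span (w ` {1..CARD('n)}) = UNIV"
    and w_eig: "\<And>l. l \<in> {1..CARD('n)} \<Longrightarrow>
        (H ** G i ** transpose H) *v w l = delta l *\<^sub>R (Sigma *v w l)"
    and r_def: "r = card {l \<in> {1..CARD('n)}. delta l > 0}"
    and r_le_h: "r \<le> h"
    and w_pos: "\<And>l. l \<in> {1..r} \<Longrightarrow>
        delta l > 0 \<and> w l \<in> range (\<lambda>x. (matrix_inv Sigma ** H) *v x)"
    and w_zero: "\<And>l. l \<in> {r+1..h} \<Longrightarrow>
        delta l = 0 \<and> w l \<in> range (\<lambda>x. (matrix_inv Sigma ** H) *v x)"
    and w_ker: "\<And>l. l \<in> {h+1..CARD('n)} \<Longrightarrow> transpose H *v w l = 0"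
    and u_pos: "\<And>l. l \<in> {1..r} \<Longrightarrow>
        u l = (1 / delta l) *\<^sub>R ((G i ** transpose H) *v w l)"
    and u_zero: "\<And>l. l \<in> {r+1..h} \<Longrightarrow>
        u l = (mp_pinv (transpose H ** matrix_inv Sigma ** H) ** transpose H ** matrix_inv Sigma)
              *v (Sigma *v w l)"
  shows "\<forall>l \<in> {1..h}.
     (G i ** transpose H ** matrix_inv Sigma ** H) *v u l = delta l *\<^sub>R u l \<and>
     w l = (matrix_inv Sigma ** H) *v u l"
proof
  fix l
  assume l: "l \<in> {1..h}"
  have G: "psd (G i)"
    by (rule psd_iterates[where B = "transpose H ** matrix_inv Sigma ** H"])
      (simp_all add: G0 GSuc psd_emp_cov psd_congruence spd_imp_psd spd_matrix_inv Sigma_spd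
        matrix_mul_assoc)
  have "l \<in> {1..CARD('n)}"
    using l rank_bound[of H] rankH by auto
  note eig = w_eig[OF this]
  show "(G i ** transpose H ** matrix_inv Sigma ** H) *v u l = delta l *\<^sub>R u l \<and>
      w l = (matrix_inv Sigma ** H) *v u l"
  proof (cases "l \<le> r")
    case True
    with l have l_pos: "l \<in> {1..r}" and "delta l \<noteq> 0"
      using w_pos by force+
    then show ?thesis
      using pencil_eigenvector_nonzero[OF spd_invertible[OF Sigma_spd] eig _ u_pos] by simp
  next
    case False
    with l have l_zero: "l \<in> {r+1..h}"
      by simp
    then obtain x where "delta l = 0" and x: "w l = (matrix_inv Sigma ** H) *v x"
      using w_zero by blast
    with eig show ?thesis
      using pencil_eigenvector_zero[OF Sigma_spd G _ x u_zero[OF l_zero]] by simp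
  qed
qed

end
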